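(* Assume the setting in the context. Let $x_i,x_j,x_k\in X$ be distinct, and assume $x_k$ is neither a parent of $x_i$ nor a parent of $x_j$. If there exist $G_1,G_2\in\mathcal G$, $M\subseteq X\setminus\{x_i\}$ and $N\subseteq X\setminus\{x_i,x_j,x_k\}$ with $x_i-G_1(M)\perp\!\!\!\perp x_j-G_2(N\cup\{x_k\})$, then there exist $G_1',G_2'\in\mathcal G$, $M'\subseteq X\setminus\{x_i\}$ and $N'\subseteq X\setminus\{x_i,x_j,x_k\}$ with $x_i-G_1'(M')\perp\!\!\!\perp x_j-G_2'(N')$.
   Context: Model: $X$ is a finite set of observed random variables and $U$ a finite set of unobserved random variables; $V=X\cup U$ and $G=(V,E)$ is a DAG on $V$. Each $v_i\in V$ satisfies $v_i=\sum_{x_j\in \mathrm{pa}(v_i)\cap X} f^{(i)}_j(x_j)+\sum_{u_k\in\mathrm{pa}(v_i)\cap U} f^{(i)}_k(u_k)+n_i$, where the $f$'s are nonlinear functions and the external noises $n_i$ are jointly independent. "Parent", "ancestor", "path", "d-separation" refer to $G$ (a path has distinct vertices). Causal Faithfulness Condition (CFC): any conditional independence among variables of $V$ that is not entailed by d-separation in $G$ does not hold. $\perp\!\!\!\perp$ denotes statistical independence, $\not\perp\!\!\!\perp$ dependence. Function class: $\mathcal G$ is a class of generalized additive functions: for $G\in\mathcal G$ and a set $M$ of observed variables, $G(M)=\sum_{x_m\in M} g_m(x_m)$ (with $G(\emptyset)=0$). It satisfies: for any $x_i,x_j\in X$, sets $M,N\subseteq X$, $G_1,G_2\in\mathcal G$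 and external noise $n_k$, if $n_k\not\perp\!\!\!\perp x_i-G_1(M)$ and $n_k\not\perp\!\!\!\perp x_j-G_2(N)$ then $x_i-G_1(M)\not\perp\!\!\!\perp x_j-G_2(N)$. Definitions, for $X'\subseteq X$ and $x_i,x_j\in X'$: an unobserved causal path (UCP) from $x_i$ to $x_j$ w.r.t. $X'$ is a directed path $x_i\to\cdots\to v_k\to x_j$ in $G$ with $v_k\notin X'$; an unobserved backdoor path (UBP) between $x_i$ and $x_j$ w.r.t. $X'$ is a path $x_i\leftarrow v_k\leftarrow\cdots\leftarrow v\to\cdots\to v_l\to x_j$ with $v_k,v_l\notin X'$ (allowing $v=v_k$, $v=v_l$, or $v=v_k=v_l$; $v$ may be in $X'$). "UBP/UCP between $x_i$ and $x_j$" means a UBP or a UCP in either direction. $x_j$ is a visible parent of $x_i$ w.r.t. $X'$ if $x_j$ is a parent of $x_i$ and there is no UBP/UCP between them w.r.t. $X'$; $(x_i,x_j)$ is a visible non-edge w.r.t. $X'$ if there is no edge between them and no UBP/UCP between them w.r.t. $X'$; $(x_i,x_j)$ is invisible w.r.t. $X'$ if there is a UBP/UCP between them w.r.t. $X'$. When $X'$ is omitted, $X'=X$. Standing facts (taken as known), for $X'\subseteq X$ and distinct $x_i,x_j\in X'$: (F1) $x_j$ is a visible parent of $x_i$ w.r.t. $X'$ iff [for all $G_1,G_2\in\mathcal G$, $M\subseteq X'\setminus\{x_i,x_j\}$, $N\subseteq X'\setminus\{x_j\}$: $x_i-G_1(M)\not\perp\!\!\!\perp x_j-G_2(N)$] and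 [there exist $G_1,G_2\in\mathcal G$, $M\subseteq X'\setminus\{x_i\}$, $N\subseteq X'\setminus\{x_i,x_j\}$ with $x_i-G_1(M)\perp\!\!\!\perp x_j-G_2(N)$]. (F2) $(x_i,x_j)$ is a visible non-edge w.r.t. $X'$ iff there exist $G_1,G_2\in\mathcal G$ and $M,N\subseteq X'\setminus\{x_i,x_j\}$ with $x_i-G_1(M)\perp\!\!\!\perp x_j-G_2(N)$. (F3) $(x_i,x_j)$ is invisible w.r.t. $X'$ iff for all $M\subseteq X'\setminus\{x_i\}$, $N\subseteq X'\setminus\{x_j\}$, $G_1,G_2\in\mathcal G$: $x_i-G_1(M)\not\perp\!\!\!\perp x_j-G_2(N)$. *)

theory Defs
  imports "HOL-Probability.Probability"
begin

definition is_dag :: "'v set \<Rightarrow> ('v \<times> 'v) set \<Rightarrow> bool" where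
  "is_dag V E \<longleftrightarrow> finite V \<and> E \<subseteq> V \<times> V \<and> acyclic E"

definition pa :: "('v \<times> 'v) set \<Rightarrow> 'v \<Rightarrow> 'v set" where
  "pa E v = {u. (u, v) \<in> E}"

definition dirpath :: "('v \<times> 'v) set \<Rightarrow> 'v list \<Rightarrow> bool" where
  "dirpath E p \<longleftrightarrow> p \<noteq> [] \<and> distinct p \<and> (\<forall>t. Suc t < length p \<longrightarrow> (p ! t, p ! Suc t) \<in> E)"

definition skelpath :: "('v \<times> 'v) set \<Rightarrow> 'v list \<Rightarrow> bool" where
  "skelpath E p \<longleftrightarrow> p \<noteq> [] \<and> distinct p \<and>
     (\<forall>t. Suc t < length p \<longrightarrow> (p ! t, p ! Suc t) \<in> E \<or> (p ! Suc t, p ! t) \<in> E)"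

definition UCP :: "('v \<times> 'v) set \<Rightarrow> 'v set \<Rightarrow> 'v \<Rightarrow> 'v \<Rightarrow> bool" where
  "UCP E X' a b \<longleftrightarrow> (\<exists>p. dirpath E p \<and> length p \<ge> 2 \<and> hd p = a \<and> last p = b \<and>
       p ! (length p - 2) \<notin> X')"

(* unobserved backdoor path between a and b w.r.t. X':
   a <- vk <- ... <- v -> ... -> vl -> b with vk, vl not in X'.
   p is the directed path v -> ... -> vk -> a, q the directed path v -> ... -> vl -> b,
   and the two branches share only the source v (so the whole path has distinct vertices). *)
definition UBP :: "('v \<times> 'v) set \<Rightarrow> 'v set \<Rightarrow> 'v \<Rightarrow> 'v \<Rightarrow> bool" where
  "UBP E X' a b \<longleftrightarrow> (\<exists>p q. dirpath E p \<and> dirpath E q \<and> length p \<ge> 2 \<and> length q \<ge> 2 \<and>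
       hd p = hd q \<and> last p = a \<and> last q = b \<and> set (tl p) \<inter> set (tl q) = {} \<and>
       p ! (length p - 2) \<notin> X' \<and> q ! (length q - 2) \<notin> X')"

definition UBP_or_UCP :: "('v \<times> 'v) set \<Rightarrow> 'v set \<Rightarrow> 'v \<Rightarrow> 'v \<Rightarrow> bool" where
  "UBP_or_UCP E X' a b \<longleftrightarrow> UBP E X' a b \<or> UCP E X' a b \<or> UCP E X' b a"

definition visible_parent :: "('v \<times> 'v) set \<Rightarrow> 'v set \<Rightarrow> 'v \<Rightarrow> 'v \<Rightarrow> bool" where
  "visible_parent E X' xj xi \<longleftrightarrow> (xj, xi) \<in> E \<and> \<not> UBP_or_UCP E X' xi xj"

definition visible_nonedge :: "('v \<times> 'v) set \<Rightarrow> 'v set \<Rightarrow> 'v \<Rightarrow> 'v \<Rightarrow> bool" where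
  "visible_nonedge E X' xi xj \<longleftrightarrow> (xi, xj) \<notin> E \<and> (xj, xi) \<notin> E \<and> \<not> UBP_or_UCP E X' xi xj"

definition invisible :: "('v \<times> 'v) set \<Rightarrow> 'v set \<Rightarrow> 'v \<Rightarrow> 'v \<Rightarrow> bool" where
  "invisible E X' xi xj \<longleftrightarrow> UBP_or_UCP E X' xi xj"

definition collider_at :: "('v \<times> 'v) set \<Rightarrow> 'v list \<Rightarrow> nat \<Rightarrow> bool" where
  "collider_at E p t \<longleftrightarrow> (p ! (t - 1), p ! t) \<in> E \<and> (p ! Suc t, p ! t) \<in> E"

definition blocked :: "('v \<times> 'v) set \<Rightarrow> 'v set \<Rightarrow> 'v list \<Rightarrow> bool" where
  "blocked E Z p \<longleftrightarrow> (\<exists>t. 0 < t \<and> Suc t < length p \<and>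
      ((collider_at E p t \<and> (E\<^sup>* `` {p ! t}) \<inter> Z = {}) \<or>
       (\<not> collider_at E p t \<and> p ! t \<in> Z)))"

definition dsep :: "('v \<times> 'v) set \<Rightarrow> 'v set \<Rightarrow> 'v set \<Rightarrow> 'v set \<Rightarrow> bool" where
  "dsep E A B Z \<longleftrightarrow> (\<forall>a\<in>A. \<forall>b\<in>B. \<forall>p. skelpath E p \<and> hd p = a \<and> last p = b \<longrightarrow> blocked E Z p)"

definition indep :: "'a measure \<Rightarrow> ('a \<Rightarrow> real) \<Rightarrow> ('a \<Rightarrow> real) \<Rightarrow> bool" where
  "indep M Y1 Y2 \<longleftrightarrow> prob_space.indep_var M borel Y1 borel Y2"

definition gen_alg :: "'a measure \<Rightarrow> ('v \<Rightarrow> 'a \<Rightarrow> real) \<Rightarrow> 'v set \<Rightarrow> 'a measure" where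
  "gen_alg M var S = sigma (space M) {var v -` B \<inter> space M | v B. v \<in> S \<and> B \<in> sets borel}"

definition cond_indep :: "'a measure \<Rightarrow> ('v \<Rightarrow> 'a \<Rightarrow> real) \<Rightarrow> 'v set \<Rightarrow> 'v set \<Rightarrow> 'v set \<Rightarrow> bool" where
  "cond_indep M var A B Z \<longleftrightarrow>
     (\<forall>EA \<in> sets (gen_alg M var A). \<forall>EB \<in> sets (gen_alg M var B).
        AE \<omega> in M. real_cond_exp M (gen_alg M var Z) (indicator (EA \<inter> EB)) \<omega> =
                    real_cond_exp M (gen_alg M var Z) (indicator EA) \<omega> *
                    real_cond_exp M (gen_alg M var Z) (indicator EB) \<omega>)"

definition nonlinear :: "(real \<Rightarrow> real) \<Rightarrow> bool" where
  "nonlinear h \<longleftrightarrow> \<not> (\<exists>a b. \<forall>x. h x = a * x + b)"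

(* The additive-noise causal model.  var v is the random variable v, nz v its external noise,
   f v u the nonlinear function through which parent u enters v. *)
definition causal_model ::
  "'a measure \<Rightarrow> 'v set \<Rightarrow> 'v set \<Rightarrow> ('v \<times> 'v) set \<Rightarrow> ('v \<Rightarrow> 'a \<Rightarrow> real) \<Rightarrow>
   ('v \<Rightarrow> 'a \<Rightarrow> real) \<Rightarrow> ('v \<Rightarrow> 'v \<Rightarrow> real \<Rightarrow> real) \<Rightarrow> bool" where
  "causal_model M X U E var nz f \<longleftrightarrow>
     prob_space M \<and> finite X \<and> finite U \<and> X \<inter> U = {} \<and> is_dag (X \<union> U) E \<and>
     (\<forall>v\<in>X \<union> U. \<forall>u\<in>pa E v. f v u \<in> borel_measurable borel \<and> nonlinear (f v u)) \<and>
     (\<forall>v\<in>X \<union> U. nz v \<in> borel_measurable M) \<and>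
     prob_space.indep_vars M (\<lambda>_. borel) nz (X \<union> U) \<and>
     (\<forall>v\<in>X \<union> U. \<forall>\<omega>\<in>space M. var v \<omega> = (\<Sum>u\<in>pa E v. f v u (var u \<omega>)) + nz v \<omega>)"

definition CFC :: "'a measure \<Rightarrow> 'v set \<Rightarrow> ('v \<times> 'v) set \<Rightarrow> ('v \<Rightarrow> 'a \<Rightarrow> real) \<Rightarrow> bool" where
  "CFC M V E var \<longleftrightarrow> (\<forall>A B Z. A \<subseteq> V \<and> B \<subseteq> V \<and> Z \<subseteq> V \<and> A \<inter> B = {} \<and> A \<inter> Z = {} \<and> B \<inter> Z = {} \<and>
       cond_indep M var A B Z \<longrightarrow> dsep E A B Z)"

(* residual  x_i - G(S)  for G given by the family of component functions g *)
definition resid :: "('v \<Rightarrow> 'a \<Rightarrow> real) \<Rightarrow> 'v \<Rightarrow> ('v \<Rightarrow> real \<Rightarrow> real) \<Rightarrow> 'v set \<Rightarrow> 'a \<Rightarrow> real" where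
  "resid var i g S = (\<lambda>\<omega>. var i \<omega> - (\<Sum>m\<in>S. g m (var m \<omega>)))"

definition GAM_class ::
  "'a measure \<Rightarrow> 'v set \<Rightarrow> 'v set \<Rightarrow> ('v \<Rightarrow> 'a \<Rightarrow> real) \<Rightarrow> ('v \<Rightarrow> 'a \<Rightarrow> real) \<Rightarrow>
   ('v \<Rightarrow> real \<Rightarrow> real) set \<Rightarrow> bool" where
  "GAM_class M X U var nz Gc \<longleftrightarrow>
     (\<forall>g\<in>Gc. \<forall>m. g m \<in> borel_measurable borel) \<and>
     (\<forall>xi\<in>X. \<forall>xj\<in>X. \<forall>Ms Ns. \<forall>g1\<in>Gc. \<forall>g2\<in>Gc. \<forall>k\<in>X \<union> U.
        Ms \<subseteq> X \<longrightarrow> Ns \<subseteq> X \<longrightarrow>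
        \<not> indep M (nz k) (resid var xi g1 Ms) \<longrightarrow> \<not> indep M (nz k) (resid var xj g2 Ns) \<longrightarrow>
        \<not> indep M (resid var xi g1 Ms) (resid var xj g2 Ns))"

(* Standing facts F1-F3 (taken as known in the paper), for every X' \<subseteq> X *)
definition standing_facts ::
  "'a measure \<Rightarrow> 'v set \<Rightarrow> ('v \<times> 'v) set \<Rightarrow> ('v \<Rightarrow> 'a \<Rightarrow> real) \<Rightarrow>
   ('v \<Rightarrow> real \<Rightarrow> real) set \<Rightarrow> bool" where
  "standing_facts M X E var Gc \<longleftrightarrow>
    (\<forall>X' \<subseteq> X. \<forall>xi\<in>X'. \<forall>xj\<in>X'. xi \<noteq> xj \<longrightarrow>
      (visible_parent E X' xj xi \<longleftrightarrow>
         (\<forall>g1\<in>Gc. \<forall>g2\<in>Gc. \<forall>Ms Ns. Ms \<subseteq> X' - {xi, xj} \<longrightarrow> Ns \<subseteq> X' - {xj} \<longrightarrow>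
             \<not> indep M (resid var xi g1 Ms) (resid var xj g2 Ns)) \<and>
         (\<exists>g1\<in>Gc. \<exists>g2\<in>Gc. \<exists>Ms Ns. Ms \<subseteq> X' - {xi} \<and> Ns \<subseteq> X' - {xi, xj} \<and>
             indep M (resid var xi g1 Ms) (resid var xj g2 Ns))) \<and>
      (visible_nonedge E X' xi xj \<longleftrightarrow>
         (\<exists>g1\<in>Gc. \<exists>g2\<in>Gc. \<exists>Ms Ns. Ms \<subseteq> X' - {xi, xj} \<and> Ns \<subseteq> X' - {xi, xj} \<and>
             indep M (resid var xi g1 Ms) (resid var xj g2 Ns))) \<and>
      (invisible E X' xi xj \<longleftrightarrow>
         (\<forall>Ms Ns. \<forall>g1\<in>Gc. \<forall>g2\<in>Gc. Ms \<subseteq> X' - {xi} \<longrightarrow> Ns \<subseteq> X' - {xj} \<longrightarrow>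
             \<not> indep M (resid var xi g1 Ms) (resid var xj g2 Ns))))"

end

theory Submission
  imports Defs
begin

text \<open>
  Independence of the two residuals rules out an unobserved backdoor or causal path between
  \<open>x\<^sub>i\<close> and \<open>x\<^sub>j\<close> relative to \<open>X\<close> (fact F3).  Such paths end in a parent of \<open>x\<^sub>i\<close> or \<open>x\<^sub>j\<close>
  that is unobserved, and \<open>x\<^sub>k\<close> is not such a parent, so hiding \<open>x\<^sub>k\<close> creates no new one: the
  pair stays free of them relative to \<open>X - {x\<^sub>k}\<close>.  There \<open>x\<^sub>j\<close> is either a visible parent of
  \<open>x\<^sub>i\<close> or the pair is a visible non-edge, and F1 or F2 yields independent residuals whose
  regressor sets avoid \<open>x\<^sub>k\<close>.  The remaining possibility, an edge \<open>x\<^sub>i \<rightarrow> x\<^sub>j\<close>, would make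
  \<open>x\<^sub>i\<close> a visible parent of \<open>x\<^sub>j\<close> relative to \<open>X\<close>, and F1 then forbids the assumed independence.
\<close>

lemma (in prob_space) indep_set_commute: "indep_set A B \<Longrightarrow> indep_set B A"
  unfolding indep_sets2_eq by (metis Int_commute mult.commute)

lemma (in prob_space) indep_var_commute: "indep_var S X T Y \<Longrightarrow> indep_var T Y S X"
  by (auto simp: indep_var_eq intro: indep_set_commute)

lemma indep_commute: "prob_space M \<Longrightarrow> indep M Y Z \<Longrightarrow> indep M Z Y"
  unfolding indep_def by (rule prob_space.indep_var_commute)

lemma dirpath_penultimate_in_pa:
  assumes "dirpath E p" "length p \<ge> 2"
  shows "p ! (length p - 2) \<in> pa E (last p)"
proof -
  have "Suc (length p - 2) = length p - 1" "Suc (length p - 2) < length p"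
    using assms(2) by simp_all
  moreover have "last p = p ! (length p - 1)"
    using assms(1) unfolding dirpath_def by (simp add: last_conv_nth)
  ultimately show ?thesis
    using assms(1) unfolding dirpath_def pa_def by (metis mem_Collect_eq)
qed

text \<open>Only the last vertex before the endpoint of a UCP or UBP is required to be unobserved.\<close>

lemma UCP_enlarge_observed:
  assumes "UCP E Y a b" "pa E b \<inter> X \<subseteq> Y"
  shows "UCP E X a b"
proof -
  obtain p where path: "dirpath E p" "length p \<ge> 2" "hd p = a" "last p = b"
    and unobserved: "p ! (length p - 2) \<notin> Y"
    using assms(1) unfolding UCP_def by blast
  have "p ! (length p - 2) \<notin> X"
    using dirpath_penultimate_in_pa[OF path(1,2)] path(4) unobserved assms(2) by blast
  with path show ?thesis unfolding UCP_def by blast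
qed

lemma UBP_enlarge_observed:
  assumes "UBP E Y a b" "pa E a \<inter> X \<subseteq> Y" "pa E b \<inter> X \<subseteq> Y"
  shows "UBP E X a b"
proof -
  obtain p q where paths: "dirpath E p" "dirpath E q" "length p \<ge> 2" "length q \<ge> 2"
      "hd p = hd q" "last p = a" "last q = b" "set (tl p) \<inter> set (tl q) = {}"
    and unobserved: "p ! (length p - 2) \<notin> Y" "q ! (length q - 2) \<notin> Y"
    using assms(1) unfolding UBP_def by blast
  have "p ! (length p - 2) \<notin> X" "q ! (length q - 2) \<notin> X"
    using dirpath_penultimate_in_pa[OF paths(1,3)] dirpath_penultimate_in_pa[OF paths(2,4)]
      paths(6,7) unobserved assms(2,3) by blast+
  with paths show ?thesis unfolding UBP_def by blast
qed

lemma UBP_or_UCP_enlarge_observed: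
  assumes "UBP_or_UCP E Y a b" "pa E a \<inter> X \<subseteq> Y" "pa E b \<inter> X \<subseteq> Y"
  shows "UBP_or_UCP E X a b"
  using assms(1) UBP_enlarge_observed[OF _ assms(2,3)]
    UCP_enlarge_observed[OF _ assms(3)] UCP_enlarge_observed[OF _ assms(2)]
  unfolding UBP_or_UCP_def by blast

lemma UBP_commute: "UBP E X a b \<Longrightarrow> UBP E X b a"
  unfolding UBP_def by (metis inf_commute)

lemma UBP_or_UCP_commute: "UBP_or_UCP E X a b \<Longrightarrow> UBP_or_UCP E X b a"
  unfolding UBP_or_UCP_def using UBP_commute[of E X a b] by blast

lemma standing_facts_at:
  assumes "standing_facts M X E var Gc" "X' \<subseteq> X" "xi \<in> X'" "xj \<in> X'" "xi \<noteq> xj"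
  shows "visible_parent E X' xj xi \<longleftrightarrow>
           (\<forall>g1\<in>Gc. \<forall>g2\<in>Gc. \<forall>Ms Ns. Ms \<subseteq> X' - {xi, xj} \<longrightarrow> Ns \<subseteq> X' - {xj} \<longrightarrow>
               \<not> indep M (resid var xi g1 Ms) (resid var xj g2 Ns)) \<and>
           (\<exists>g1\<in>Gc. \<exists>g2\<in>Gc. \<exists>Ms Ns. Ms \<subseteq> X' - {xi} \<and> Ns \<subseteq> X' - {xi, xj} \<and>
               indep M (resid var xi g1 Ms) (resid var xj g2 Ns))"
    and "visible_nonedge E X' xi xj \<longleftrightarrow>
           (\<exists>g1\<in>Gc. \<exists>g2\<in>Gc. \<exists>Ms Ns. Ms \<subseteq> X' - {xi, xj} \<and> Ns \<subseteq> X' - {xi, xj} \<and>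
               indep M (resid var xi g1 Ms) (resid var xj g2 Ns))"
    and "invisible E X' xi xj \<longleftrightarrow>
           (\<forall>Ms Ns. \<forall>g1\<in>Gc. \<forall>g2\<in>Gc. Ms \<subseteq> X' - {xi} \<longrightarrow> Ns \<subseteq> X' - {xj} \<longrightarrow>
               \<not> indep M (resid var xi g1 Ms) (resid var xj g2 Ns))"
  by (simp_all only: assms(1)[unfolded standing_facts_def, rule_format, OF assms(2-5)])

lemma not_invisible_if_indep:
  assumes "standing_facts M X E var Gc" "X' \<subseteq> X" "xi \<in> X'" "xj \<in> X'" "xi \<noteq> xj"
    and "g1 \<in> Gc" "g2 \<in> Gc" "Ms \<subseteq> X' - {xi}" "Ns \<subseteq> X' - {xj}"
    and "indep M (resid var xi g1 Ms) (resid var xj g2 Ns)"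
  shows "\<not> invisible E X' xi xj"
proof
  assume "invisible E X' xi xj"
  then have "\<forall>Ms Ns. \<forall>g1\<in>Gc. \<forall>g2\<in>Gc. Ms \<subseteq> X' - {xi} \<longrightarrow> Ns \<subseteq> X' - {xj} \<longrightarrow>
               \<not> indep M (resid var xi g1 Ms) (resid var xj g2 Ns)"
    by (rule standing_facts_at(3)[OF assms(1-5), THEN iffD1])
  with assms(6-10) show False by blast
qed

lemma visible_parent_not_indep:
  assumes "standing_facts M X E var Gc" "X' \<subseteq> X" "xi \<in> X'" "xj \<in> X'" "xi \<noteq> xj"
    and "visible_parent E X' xj xi"
    and "g1 \<in> Gc" "g2 \<in> Gc" "Ms \<subseteq> X' - {xi, xj}" "Ns \<subseteq> X' - {xj}"
  shows "\<not> indep M (resid var xi g1 Ms) (resid var xj g2 Ns)"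
proof -
  have "\<forall>g1\<in>Gc. \<forall>g2\<in>Gc. \<forall>Ms Ns. Ms \<subseteq> X' - {xi, xj} \<longrightarrow> Ns \<subseteq> X' - {xj} \<longrightarrow>
          \<not> indep M (resid var xi g1 Ms) (resid var xj g2 Ns)"
    using assms(6) by (rule standing_facts_at(1)[OF assms(1-5), THEN iffD1, THEN conjunct1])
  with assms(7-10) show ?thesis by blast
qed

lemma exists_indep_if_not_invisible:
  assumes "standing_facts M X E var Gc" "X' \<subseteq> X" "xi \<in> X'" "xj \<in> X'" "xi \<noteq> xj"
    and "\<not> invisible E X' xi xj" "(xi, xj) \<notin> E"
  shows "\<exists>g1\<in>Gc. \<exists>g2\<in>Gc. \<exists>Ms Ns. Ms \<subseteq> X' - {xi} \<and> Ns \<subseteq> X' - {xi, xj} \<and>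
           indep M (resid var xi g1 Ms) (resid var xj g2 Ns)"
proof (cases "(xj, xi) \<in> E")
  case True
  then have "visible_parent E X' xj xi"
    using assms(6) UBP_or_UCP_commute[of E X' xj xi]
    unfolding visible_parent_def invisible_def by blast
  then show ?thesis by (rule standing_facts_at(1)[OF assms(1-5), THEN iffD1, THEN conjunct2])
next
  case False
  then have "visible_nonedge E X' xi xj"
    using assms(6,7) unfolding visible_nonedge_def invisible_def by blast
  then obtain g1 g2 Ms Ns where "g1 \<in> Gc" "g2 \<in> Gc" "Ms \<subseteq> X' - {xi, xj}" "Ns \<subseteq> X' - {xi, xj}"
      "indep M (resid var xi g1 Ms) (resid var xj g2 Ns)"
    by (auto dest: standing_facts_at(2)[OF assms(1-5), THEN iffD1])
  moreover have "Ms \<subseteq> X' - {xi}" using \<open>Ms \<subseteq> X' - {xi, xj}\<close> by blast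
  ultimately show ?thesis by blast
qed

theorem proposition3:
  fixes M :: "'a measure" and X U :: "'v set" and E :: "('v \<times> 'v) set"
    and var nz :: "'v \<Rightarrow> 'a \<Rightarrow> real" and f :: "'v \<Rightarrow> 'v \<Rightarrow> real \<Rightarrow> real"
    and Gc :: "('v \<Rightarrow> real \<Rightarrow> real) set"
    and xi xj xk :: 'v
  assumes model: "causal_model M X U E var nz f"
    and cfc: "CFC M (X \<union> U) E var"
    and gam: "GAM_class M X U var nz Gc"
    and facts: "standing_facts M X E var Gc"
    and mem: "xi \<in> X" "xj \<in> X" "xk \<in> X"
    and dist: "xi \<noteq> xj" "xi \<noteq> xk" "xj \<noteq> xk"
    and not_pa: "xk \<notin> pa E xi" "xk \<notin> pa E xj"
    and hyp: "\<exists>g1\<in>Gc. \<exists>g2\<in>Gc. \<exists>Ms Ns. Ms \<subseteq> X - {xi} \<and> Ns \<subseteq> X - {xi, xj, xk} \<and>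
               indep M (resid var xi g1 Ms) (resid var xj g2 (Ns \<union> {xk}))"
  shows "\<exists>g1'\<in>Gc. \<exists>g2'\<in>Gc. \<exists>Ms' Ns'. Ms' \<subseteq> X - {xi} \<and> Ns' \<subseteq> X - {xi, xj, xk} \<and>
               indep M (resid var xi g1' Ms') (resid var xj g2' Ns')"
proof -
  obtain g1 g2 Ms Ns where g: "g1 \<in> Gc" "g2 \<in> Gc"
      and Ms: "Ms \<subseteq> X - {xi}" and Ns: "Ns \<subseteq> X - {xi, xj, xk}"
      and indep_resid: "indep M (resid var xi g1 Ms) (resid var xj g2 (Ns \<union> {xk}))"
    using hyp by blast
  have Nsk: "Ns \<union> {xk} \<subseteq> X - {xj, xi}" using Ns mem(3) dist by blast
  have visible: "\<not> invisible E X xi xj"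
    using not_invisible_if_indep[OF facts order_refl mem(1,2) dist(1) g Ms _ indep_resid] Nsk
    by blast
  have no_edge: "(xi, xj) \<notin> E"
  proof
    assume "(xi, xj) \<in> E"
    with visible have "visible_parent E X xi xj"
      using UBP_or_UCP_commute[of E X xj xi] unfolding visible_parent_def invisible_def by blast
    then have "\<not> indep M (resid var xj g2 (Ns \<union> {xk})) (resid var xi g1 Ms)"
      using visible_parent_not_indep[OF facts order_refl mem(2,1) dist(1)[symmetric] _ g(2,1) Nsk Ms]
      by blast
    moreover have "prob_space M" using model unfolding causal_model_def by blast
    ultimately show False using indep_resid indep_commute by blast
  qed
  have "pa E xi \<inter> X \<subseteq> X - {xk}" "pa E xj \<inter> X \<subseteq> X - {xk}"
    using not_pa by blast+
  then have visible_without_xk: "\<not> invisible E (X - {xk}) xi xj"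
    using visible unfolding invisible_def by (metis UBP_or_UCP_enlarge_observed)
  have "xi \<in> X - {xk}" "xj \<in> X - {xk}" using mem dist by blast+
  then obtain h1 h2 Ms' Ns' where "h1 \<in> Gc" "h2 \<in> Gc"
      "Ms' \<subseteq> X - {xk} - {xi}" "Ns' \<subseteq> X - {xk} - {xi, xj}"
      "indep M (resid var xi h1 Ms') (resid var xj h2 Ns')"
    using exists_indep_if_not_invisible[OF facts Diff_subset _ _ dist(1) visible_without_xk no_edge]
    by blast
  moreover have "Ms' \<subseteq> X - {xi}" "Ns' \<subseteq> X - {xi, xj, xk}"
    using \<open>Ms' \<subseteq> X - {xk} - {xi}\<close> \<open>Ns' \<subseteq> X - {xk} - {xi, xj}\<close> by blast+
  ultimately show ?thesis by blast
qed

end
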